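(* Let $\mathcal A\subset\mathbb R^n$ be compact with diameter $D_{\mathcal A}<\infty$, let $\mathcal X=\mathrm{conv}(\mathcal A)$ or $\mathcal X=\mathrm{lin}(\mathcal A)$, and let $f$ be differentiable with $L$-Lipschitz gradient. Let $\{x_t\}_{t\ge0}$ be generated by the AC-FW algorithm described in the context, and assume Conditions (D) and (S) hold. Fix $\eta>1$. Then for every $t\ge0$: (i) $f(x_{t+1})\le f(\bar x_{t+1})\le f(x_t)-\gamma_t\nabla f(x_t)^\top d_t+\frac{L_{t+1}}{2}\gamma_t^2\|d_t\|_2^2$; (ii) if $t\in\mathcal I_\eta$, then $f(x_{t+1})\le f(x_t)-\left(1-\frac{\eta}{2}\right)\gamma_t\nabla f(x_t)^\top d_t$; (iii) if $t\in\mathcal G\cap\mathcal I_\eta$, then $f(x_{t+1})\le f(x_t)-\left(1-\frac{\eta}{2}\right)\min\left\{1,\frac{\nabla f(x_t)^\top d_t}{L_t\|d_t\|_2^2}\right\}\nabla f(x_t)^\top d_t$; (iv) if in addition $f$ is convex and $\mathcal X=\mathrm{conv}(\mathcal A)$, then $\nabla f(x_t)^\top(x_t-v_t)\ge f(x_t)-f(x^\star)$.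
   Context: $D_{\mathcal A}:=\sup_{x,y\in\mathcal A}\|x-y\|_2$. $f:\mathbb R^n\to\mathbb R$ satisfies $\|\nabla f(x)-\nabla f(y)\|_2\le L\|x-y\|_2$ for all $x,y$. $x^\star$ denotes an optimal solution of $\min_{x\in\mathcal X}f(x)$. For $x\neq y$ let $\ell(x,y):=2|f(y)-f(x)-\nabla f(x)^\top(y-x)|/\|y-x\|_2^2$, and $\ell(x,x):=0$. AC-FW algorithm: given a damping sequence $\{r_t\}_{t\ge0}$ and a direction-finding subroutine, pick $x_{-1}\in\mathcal A$, $x_0\in\arg\min_{v\in\mathcal A}\nabla f(x_{-1})^\top v$, $L_0:=\ell(x_{-1},x_0)$. For $t=0,1,2,\dots$: choose $v_t\in\arg\min_{v\in\mathcal A}\nabla f(x_t)^\top v$; the subroutine returns $d_t\in\mathbb R^n$ and $\gamma_t^{\max}\in(0,\infty]$; set $\gamma_t:=\min\{\nabla f(x_t)^\top d_t/(L_t\|d_t\|_2^2),\gamma_t^{\max}\}$, $\bar x_{t+1}:=x_t-\gamma_t d_t$, $L_{t+1}:=\max\{\ell(x_t,\bar x_{t+1}),r_tL_t\}$, and $x_{t+1}:=\bar x_{t+1}$ if $f(\bar x_{t+1})<f(x_t)$, else $x_{t+1}:=x_t$. For $\eta>1$: $\mathcal I_\eta:=\{t\ge0:L_{t+1}\le\eta L_t\}$; $\mathcal G:=\{t\ge0:\gamma_t^{\max}\ge1\text{ or }\gamma_t<\gamma_t^{\max}\}$. Condition (D): $r_t\in(0,1]$ for all $t$ and $\prod_{t\ge0}r_t\in(0,1]$.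 Condition (S): for every $t\ge0$: (i) $\|d_t\|_2\le D_{\mathcal A}$ and $x_t-\gamma d_t\in\mathcal X$ for every (finite) $\gamma\in[0,\gamma_t^{\max}]$; (ii) $\mathcal G$ is infinite; (iii) if $f$ is convex, there is a constant $R\ge1$ independent of $t$ with $\nabla f(x_t)^\top d_t\ge (f(x_t)-f(x^\star))/R$. *)

theory Defs
  imports "HOL-Analysis.Analysis" "HOL-Library.Extended_Real"
begin

definition ell :: "('a::euclidean_space \<Rightarrow> real) \<Rightarrow> ('a \<Rightarrow> 'a) \<Rightarrow> 'a \<Rightarrow> 'a \<Rightarrow> real" where
  "ell f grad x y = (if x = y then 0
     else 2 * \<bar>f y - f x - grad x \<bullet> (y - x)\<bar> / (norm (y - x))\<^sup>2)"

end

(* The value f(bar x_{t+1}) is controlled by the local curvature estimate: by definition of ell,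
   f(y) <= f(x) + grad f(x)^T (y - x) + ell(x,y)/2 ||y - x||^2, and L_{t+1} dominates
   ell(x_t, bar x_{t+1}) by construction.  The short-step rule gives
   L_t gamma_t^2 ||d_t||^2 <= gamma_t grad f(x_t)^T d_t, so when L_{t+1} <= eta L_t the quadratic
   term costs at most an eta/2 fraction of the linear decrease; on a good step gamma_t is at least
   min {1, grad f(x_t)^T d_t / (L_t ||d_t||^2)}.  Part (iv) is the tangent inequality of a convex
   function combined with the fact that v_t minimizes the linear function grad f(x_t)^T v over A,
   hence over conv A. *)

theory Submission
  imports Defs
begin

lemma convex_on_along_line:
  fixes f :: "'a::real_vector \<Rightarrow> real"
  assumes "convex_on UNIV f"
  shows "convex_on UNIV (\<lambda>s::real. f (x + s *\<^sub>R u))"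
proof (rule convex_onI)
  fix s t \<mu> :: real
  assume "0 < \<mu>" "\<mu> < 1"
  then have "x + ((1 - \<mu>) * s + \<mu> * t) *\<^sub>R u = (1 - \<mu>) *\<^sub>R (x + s *\<^sub>R u) + \<mu> *\<^sub>R (x + t *\<^sub>R u)"
    by (simp add: algebra_simps flip: scaleR_add_left)
  with assms \<open>0 < \<mu>\<close> \<open>\<mu> < 1\<close>
  show "f (x + ((1 - \<mu>) *\<^sub>R s + \<mu> *\<^sub>R t) *\<^sub>R u) \<le> (1 - \<mu>) * f (x + s *\<^sub>R u) + \<mu> * f (x + t *\<^sub>R u)"
    by (simp add: convex_onD)
qed simp

lemma convex_on_has_derivative_above_tangent:
  fixes f :: "'a::real_normed_vector \<Rightarrow> real"
  assumes convex: "convex_on UNIV f" and deriv: "(f has_derivative f') (at x)"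
  shows "f x + f' (y - x) \<le> f y"
proof -
  define h where "h s = f (x + s *\<^sub>R (y - x))" for s :: real
  have "((\<lambda>s::real. x + s *\<^sub>R (y - x)) has_derivative (\<lambda>s. s *\<^sub>R (y - x))) (at 0)"
    by (auto intro!: derivative_eq_intros)
  moreover have "(f has_derivative f') (at (x + 0 *\<^sub>R (y - x)))"
    using deriv by simp
  ultimately have "(h has_derivative (\<lambda>s. f' (s *\<^sub>R (y - x)))) (at 0)"
    unfolding h_def by (rule has_derivative_compose)
  moreover have "(\<lambda>s. f' (s *\<^sub>R (y - x))) = (*) (f' (y - x))"
    using has_derivative_linear[OF deriv] by (simp add: linear_scale fun_eq_iff)
  ultimately have "(h has_field_derivative f' (y - x)) (at 0)"
    by (simp add: has_field_derivative_def mult.commute)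
  then have "f' (y - x) * (1 - 0) \<le> h 1 - h 0"
    using convex_on_along_line[OF convex] unfolding h_def
    by (intro convex_on_imp_above_tangent) auto
  then show ?thesis
    by (simp add: h_def)
qed

lemma ell_nonneg: "0 \<le> ell f grad x y"
  unfolding ell_def by simp

lemma le_linearization_plus_ell:
  "f y \<le> f x + grad x \<bullet> (y - x) + ell f grad x y / 2 * (norm (y - x))\<^sup>2"
proof (cases "x = y")
  case False
  then have "ell f grad x y / 2 * (norm (y - x))\<^sup>2 = \<bar>f y - f x - grad x \<bullet> (y - x)\<bar>"
    by (simp add: ell_def)
  then show ?thesis
    by linarith
qed simp

lemma step_rule_curvature_le:
  fixes K g \<gamma> :: real and \<gamma>max :: ereal
  assumes K: "0 \<le> K" and \<gamma>max: "0 < \<gamma>max" and \<gamma>: "ereal \<gamma> = min (ereal (g / K)) \<gamma>max"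
  shows "K * \<gamma>\<^sup>2 \<le> \<gamma> * g"
proof (cases "ereal (g / K) \<le> \<gamma>max")
  case True
  then have "\<gamma> = g / K"
    using \<gamma> by (simp add: min_def)
  then show ?thesis
    using K by (cases "K = 0") (simp_all add: power2_eq_square)
next
  case False
  then have "ereal \<gamma> = \<gamma>max"
    using \<gamma> by (simp add: min_def)
  with False \<gamma>max have "0 < \<gamma>" "\<gamma> < g / K"
    by auto
  moreover from this K have "0 < K"
    by (cases "K = 0") auto
  ultimately have "\<gamma> * (K * \<gamma>) \<le> \<gamma> * g"
    by (simp add: field_simps)
  then show ?thesis
    by (simp add: power2_eq_square algebra_simps)
qed

lemma step_rule_ge_min_one:
  fixes q \<gamma> :: real and \<gamma>max :: ereal
  assumes \<gamma>: "ereal \<gamma> = min (ereal q) \<gamma>max" and good: "1 \<le> \<gamma>max \<or> ereal \<gamma> < \<gamma>max"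
  shows "min 1 q \<le> \<gamma>"
  using good
proof
  assume "1 \<le> \<gamma>max"
  then have "min (ereal q) 1 \<le> ereal \<gamma>"
    unfolding \<gamma> by (rule min.mono[OF order_refl])
  then show ?thesis
    by (metis ereal_less_eq(3) ereal_min min.commute one_ereal_def)
next
  assume "ereal \<gamma> < \<gamma>max"
  then have "\<gamma> = q"
    using \<gamma> by (auto simp: min_def split: if_splits)
  then show ?thesis
    by simp
qed

lemma min_one_ratio_mult_nonneg:
  fixes K g :: real
  assumes "0 \<le> K"
  shows "0 \<le> min 1 (g / K) * g"
proof (cases "g / K \<le> 1")
  case True
  have "0 \<le> g / K * g"
    using assms by (simp add: mult.commute)
  with True show ?thesis
    by (simp add: min_absorb2)
next
  case False
  with assms have "0 < g"
    by (smt (verit) divide_nonpos_nonneg)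
  with False show ?thesis
    by simp
qed

lemma step_rule_min_one_mult_le:
  fixes K g \<gamma> :: real and \<gamma>max :: ereal
  assumes K: "0 \<le> K" and \<gamma>max: "0 < \<gamma>max" and \<gamma>: "ereal \<gamma> = min (ereal (g / K)) \<gamma>max"
    and good: "1 \<le> \<gamma>max \<or> ereal \<gamma> < \<gamma>max"
  shows "min 1 (g / K) * g \<le> \<gamma> * g"
proof (cases "0 \<le> g")
  case True
  show ?thesis
    using step_rule_ge_min_one[OF \<gamma> good] True by (rule mult_right_mono)
next
  case False
  with K have "g / K \<le> 0"
    by (simp add: divide_nonpos_nonneg)
  with \<gamma>max have "ereal (g / K) \<le> \<gamma>max"
    by (metis ereal_le_le order_less_le zero_ereal_def)
  then have "\<gamma> = g / K"
    using \<gamma> by (simp add: min_def)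
  with \<open>g / K \<le> 0\<close> show ?thesis
    by simp
qed

lemma fw_gap_ge_suboptimality:
  fixes f :: "'a::real_inner \<Rightarrow> real"
  assumes convex: "convex_on UNIV f"
    and deriv: "(f has_derivative (\<lambda>h. g \<bullet> h)) (at x)"
    and v_min: "\<forall>u\<in>A. g \<bullet> v \<le> g \<bullet> u"
    and y: "y \<in> convex hull A"
  shows "f x - f y \<le> g \<bullet> (x - v)"
proof -
  have "convex hull A \<subseteq> {u. g \<bullet> v \<le> g \<bullet> u}"
    using v_min by (intro hull_minimal) (auto simp: convex_halfspace_ge)
  with y have "g \<bullet> v \<le> g \<bullet> y"
    by auto
  moreover have "f x + g \<bullet> (y - x) \<le> f y"
    using convex_on_has_derivative_above_tangent[OF convex deriv] .
  ultimately show ?thesis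
    by (simp add: inner_diff_right)
qed

locale ac_fw_step =
  fixes f :: "'a::euclidean_space \<Rightarrow> real" and grad :: "'a \<Rightarrow> 'a"
    and x d xbar xnext :: 'a and \<gamma> L L' :: real and \<gamma>max :: ereal
  assumes L_nonneg: "0 \<le> L"
    and \<gamma>max_pos: "0 < \<gamma>max"
    and step_rule: "ereal \<gamma> = min (ereal (grad x \<bullet> d / (L * (norm d)\<^sup>2))) \<gamma>max"
    and xbar_eq: "xbar = x - \<gamma> *\<^sub>R d"
    and ell_le: "ell f grad x xbar \<le> L'"
    and xnext_eq: "xnext = (if f xbar < f x then xbar else x)"
begin

lemma xnext_le_xbar: "f xnext \<le> f xbar"
  and xnext_le: "f xnext \<le> f x"
  using xnext_eq by auto

lemma xbar_le: "f xbar \<le> f x - \<gamma> * (grad x \<bullet> d) + L' / 2 * \<gamma>\<^sup>2 * (norm d)\<^sup>2"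
proof -
  have "ell f grad x xbar / 2 * (\<gamma>\<^sup>2 * (norm d)\<^sup>2) \<le> L' / 2 * (\<gamma>\<^sup>2 * (norm d)\<^sup>2)"
    using ell_le by (intro mult_right_mono) auto
  with le_linearization_plus_ell[of f xbar x grad] show ?thesis
    by (simp add: xbar_eq power_mult_distrib mult.assoc)
qed

lemma xnext_le_if_curvature_le:
  assumes "L' \<le> \<eta> * L" and "0 \<le> \<eta>"
  shows "f xnext \<le> f x - (1 - \<eta> / 2) * \<gamma> * (grad x \<bullet> d)"
proof -
  have "L' / 2 * \<gamma>\<^sup>2 * (norm d)\<^sup>2 \<le> \<eta> * L / 2 * \<gamma>\<^sup>2 * (norm d)\<^sup>2"
    using assms(1) by (intro mult_right_mono divide_right_mono) auto
  also have "\<dots> = \<eta> / 2 * ((L * (norm d)\<^sup>2) * \<gamma>\<^sup>2)"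
    by (simp add: algebra_simps)
  also have "\<dots> \<le> \<eta> / 2 * (\<gamma> * (grad x \<bullet> d))"
    using step_rule_curvature_le[OF _ \<gamma>max_pos step_rule] L_nonneg \<open>0 \<le> \<eta>\<close>
    by (intro mult_left_mono) auto
  finally show ?thesis
    using xbar_le xnext_le_xbar by (simp add: algebra_simps)
qed

lemma xnext_le_if_good_step:
  assumes good: "1 \<le> \<gamma>max \<or> ereal \<gamma> < \<gamma>max" and "L' \<le> \<eta> * L" and "0 \<le> \<eta>"
  shows "f xnext \<le> f x - (1 - \<eta> / 2) * min 1 (grad x \<bullet> d / (L * (norm d)\<^sup>2)) * (grad x \<bullet> d)"
proof (cases "\<eta> \<le> 2")
  case True
  have "min 1 (grad x \<bullet> d / (L * (norm d)\<^sup>2)) * (grad x \<bullet> d) \<le> \<gamma> * (grad x \<bullet> d)"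
    using step_rule_min_one_mult_le[OF _ \<gamma>max_pos step_rule good] L_nonneg by simp
  with True have "(1 - \<eta> / 2) * (min 1 (grad x \<bullet> d / (L * (norm d)\<^sup>2)) * (grad x \<bullet> d))
      \<le> (1 - \<eta> / 2) * (\<gamma> * (grad x \<bullet> d))"
    by (intro mult_left_mono) auto
  with xnext_le_if_curvature_le[OF assms(2,3)] show ?thesis
    by (simp add: mult.assoc)
next
  case False
  have "0 \<le> min 1 (grad x \<bullet> d / (L * (norm d)\<^sup>2)) * (grad x \<bullet> d)"
    using min_one_ratio_mult_nonneg L_nonneg by simp
  with False have "(1 - \<eta> / 2) * (min 1 (grad x \<bullet> d / (L * (norm d)\<^sup>2)) * (grad x \<bullet> d)) \<le> 0"
    by (intro mult_nonpos_nonneg) auto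
  with xnext_le show ?thesis
    by (simp add: mult.assoc)
qed

end

theorem lemma4:
  fixes A X :: "'a::euclidean_space set"
    and f :: "'a \<Rightarrow> real" and grad :: "'a \<Rightarrow> 'a" and Lf :: real
    and xm1 :: 'a and x xb v d :: "nat \<Rightarrow> 'a"
    and gmax :: "nat \<Rightarrow> ereal" and gam Lt r :: "nat \<Rightarrow> real"
    and eta :: real
  assumes A: "compact A" "A \<noteq> {}"
    and X: "X = convex hull A \<or> X = span A"
    and deriv: "\<And>y. (f has_derivative (\<lambda>h. grad y \<bullet> h)) (at y)"
    and lip: "\<And>y z. norm (grad y - grad z) \<le> Lf * norm (y - z)"
    \<comment> \<open>initialisation\<close>
    and init_xm1: "xm1 \<in> A"
    and init_x0: "x 0 \<in> A" "\<forall>u\<in>A. grad xm1 \<bullet> x 0 \<le> grad xm1 \<bullet> u"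
    and init_L0: "Lt 0 = ell f grad xm1 (x 0)"
    \<comment> \<open>iteration\<close>
    and vt: "\<And>t. v t \<in> A \<and> (\<forall>u\<in>A. grad (x t) \<bullet> v t \<le> grad (x t) \<bullet> u)"
    and gmax_pos: "\<And>t. gmax t > 0"
    and gam: "\<And>t. ereal (gam t) =
                 min (ereal (grad (x t) \<bullet> d t / (Lt t * (norm (d t))\<^sup>2))) (gmax t)"
    and xbar: "\<And>t. xb (Suc t) = x t - gam t *\<^sub>R d t"
    and Lnext: "\<And>t. Lt (Suc t) = max (ell f grad (x t) (xb (Suc t))) (r t * Lt t)"
    and xnext: "\<And>t. x (Suc t) = (if f (xb (Suc t)) < f (x t) then xb (Suc t) else x t)"
    \<comment> \<open>Condition (D)\<close>
    and D1: "\<And>t. 0 < r t \<and> r t \<le> 1"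
    and D2: "\<exists>p. (\<lambda>T. \<Prod>t<T. r t) \<longlonglongrightarrow> p \<and> 0 < p \<and> p \<le> 1"
    \<comment> \<open>Condition (S)\<close>
    and S1: "\<And>t. norm (d t) \<le> diameter A \<and>
                (\<forall>\<gamma>::real. 0 \<le> \<gamma> \<and> ereal \<gamma> \<le> gmax t \<longrightarrow> x t - \<gamma> *\<^sub>R d t \<in> X)"
    and S2: "infinite {t. gmax t \<ge> 1 \<or> ereal (gam t) < gmax t}"
    and S3: "convex_on UNIV f \<Longrightarrow>
               \<exists>R\<ge>1. \<forall>t xs. (xs \<in> X \<and> (\<forall>y\<in>X. f xs \<le> f y)) \<longrightarrow>
                  grad (x t) \<bullet> d t \<ge> (f (x t) - f xs) / R"
    and eta: "eta > 1"
  shows "\<forall>t.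
     (f (x (Suc t)) \<le> f (xb (Suc t)) \<and>
      f (xb (Suc t)) \<le> f (x t) - gam t * (grad (x t) \<bullet> d t)
                        + Lt (Suc t) / 2 * (gam t)\<^sup>2 * (norm (d t))\<^sup>2)
   \<and> (Lt (Suc t) \<le> eta * Lt t \<longrightarrow>
        f (x (Suc t)) \<le> f (x t) - (1 - eta / 2) * gam t * (grad (x t) \<bullet> d t))
   \<and> ((gmax t \<ge> 1 \<or> ereal (gam t) < gmax t) \<and> Lt (Suc t) \<le> eta * Lt t \<longrightarrow>
        f (x (Suc t)) \<le> f (x t) - (1 - eta / 2)
           * min 1 (grad (x t) \<bullet> d t / (Lt t * (norm (d t))\<^sup>2)) * (grad (x t) \<bullet> d t))
   \<and> (convex_on UNIV f \<and> X = convex hull A \<longrightarrow>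
        (\<forall>xs. xs \<in> X \<and> (\<forall>y\<in>X. f xs \<le> f y) \<longrightarrow>
           grad (x t) \<bullet> (x t - v t) \<ge> f (x t) - f xs))"
proof -
  have L_nonneg: "0 \<le> Lt t" for t
    using init_L0 Lnext ell_nonneg by (induction t) (auto simp: le_max_iff_disj)
  have step: "ac_fw_step f grad (x t) (d t) (xb (Suc t)) (x (Suc t)) (gam t) (Lt t) (Lt (Suc t)) (gmax t)"
    for t
    using L_nonneg gmax_pos gam xbar Lnext xnext by unfold_locales auto
  have gap: "f (x t) - f xs \<le> grad (x t) \<bullet> (x t - v t)"
    if "convex_on UNIV f" "xs \<in> convex hull A" for t xs
    using fw_gap_ge_suboptimality[OF that(1) deriv[of "x t"] _ that(2)] vt by blast
  show ?thesis
    using ac_fw_step.xnext_le_xbar[OF step] ac_fw_step.xbar_le[OF step]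
      ac_fw_step.xnext_le_if_curvature_le[OF step] ac_fw_step.xnext_le_if_good_step[OF step]
      gap eta
    by auto
qed

end
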